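(* Let $M:Z^n\times Z\to[0,B]$ be an $(\epsilon,\delta)$-differentially private evaluation algorithm and let $P$ be an arbitrary distribution over $Z$. Then for every positive integer $k$, $$\mathbb{E}_{S,S'\sim P^n}\Big[\big(\mathcal{E}_{S'}[M(S)]\big)^k\Big]\le e^{k^2\epsilon}\cdot\mathbb{E}_{S\sim P^n}\Big[\big(\mathcal{E}_S[M(S)]+k\delta B\big)^k\Big].$$
   Context: $M$ is an $(\epsilon,\delta)$-differentially private evaluation algorithm if for every $z\in Z$, the randomized output $M(S,z)$ is $(\epsilon,\delta)$-differentially private with respect to $S$: for all $S,S'\in Z^n$ differing in a single element and every set $O$, $\Pr[M(S,z)\in O]\le e^{\epsilon}\Pr[M(S',z)\in O]+\delta$. For $S=(z_1,\dots,z_n)$ and $S'=(z'_1,\dots,z'_n)$ drawn independently from $P^n$, $\mathcal{E}_S[M(S)]=\frac1n\sum_{i\in[n]}\mathbb{E}_M[M(S,z_i)]$ and $\mathcal{E}_{S'}[M(S)]=\frac1n\sum_{i\in[n]}\mathbb{E}_M[M(S,z'_i)]$. *)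

theory Defs
  imports "HOL-Probability.Probability"
begin

text \<open>Samples S in Z^n are represented as (extensional) functions on {..<n},
  i.e. points of the product space of n copies of the data space.\<close>

definition sample_space :: "'z measure \<Rightarrow> nat \<Rightarrow> (nat \<Rightarrow> 'z) measure" where
  "sample_space P n = (\<Pi>\<^sub>M i\<in>{..<n}. P)"

definition neighbours :: "nat \<Rightarrow> (nat \<Rightarrow> 'z) \<Rightarrow> (nat \<Rightarrow> 'z) \<Rightarrow> bool" where
  "neighbours n S S' \<longleftrightarrow> (\<exists>i<n. \<forall>j. j \<noteq> i \<longrightarrow> S j = S' j)"

definition dp_eval ::
  "'z measure \<Rightarrow> nat \<Rightarrow> ((nat \<Rightarrow> 'z) \<Rightarrow> 'z \<Rightarrow> real measure) \<Rightarrow> real \<Rightarrow> real \<Rightarrow> bool" where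
  "dp_eval P n M \<epsilon> \<delta> \<longleftrightarrow>
     (\<forall>z\<in>space P. \<forall>S\<in>space (sample_space P n). \<forall>S'\<in>space (sample_space P n).
        neighbours n S S' \<longrightarrow>
        (\<forall>A\<in>sets borel. measure (M S z) A \<le> exp \<epsilon> * measure (M S' z) A + \<delta>))"

definition eval_mean :: "((nat \<Rightarrow> 'z) \<Rightarrow> 'z \<Rightarrow> real measure) \<Rightarrow> (nat \<Rightarrow> 'z) \<Rightarrow> 'z \<Rightarrow> real" where
  "eval_mean M S z = (\<integral>x. x \<partial>(M S z))"

text \<open>emp_eval n M S T = (1/n) sum_i E_M[M(S, T i)]; so E_S[M(S)] = emp_eval n M S S
  and E_{S'}[M(S)] = emp_eval n M S S'.\<close>
definition emp_eval :: "nat \<Rightarrow> ((nat \<Rightarrow> 'z) \<Rightarrow> 'z \<Rightarrow> real measure) \<Rightarrow> (nat \<Rightarrow> 'z) \<Rightarrow> (nat \<Rightarrow> 'z) \<Rightarrow> real" where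
  "emp_eval n M S T = (1 / real n) * (\<Sum>i<n. eval_mean M S (T i))"

end

theory Submission
  imports Defs
begin

text \<open>Expand the k-th power of the held-out evaluation into products over index tuples
  f : [k] \<rightarrow> [n]. For a fixed tuple, replace the coordinates of S indexed by the range of f
  by the corresponding coordinates of S'. The new sample U is again distributed as P^n, it
  differs from S in at most k coordinates, and it agrees with S' on that range. Group privacy,
  applied to the means (which inherit an (\<epsilon>, \<delta> B) guarantee), bounds each of the k factors
  M(S, S'(f j)) by exp(k \<epsilon>) (M(U, U(f j)) + k \<delta> B); averaging over f turns the product
  bounds back into the k-th power of the in-sample evaluation.\<close>

lemma staircase_approx:
  fixes h x :: real
  assumes "0 \<le> h" "0 \<le> x" "x \<le> real N * h"
  shows "(\<Sum>j\<in>{1..N}. h * indicator {real j * h<..} x) \<le> x \<and>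
         x \<le> (\<Sum>j\<in>{1..N}. h * indicator {real j * h<..} x) + h"
  using assms(3)
proof (induction N)
  case 0
  then show ?case using assms by simp
next
  case (Suc N)
  have "indicator {real (Suc N) * h<..} x = (0::real)"
    using Suc.prems by (simp add: indicator_def)
  then have split_last: "(\<Sum>j\<in>{1..Suc N}. h * indicator {real j * h<..} x)
      = (\<Sum>j\<in>{1..N}. h * indicator {real j * h<..} x)"
    by (simp only: sum.cl_ivl_Suc) simp
  show ?case
  proof (cases "x \<le> real N * h")
    case True
    show ?thesis
      using Suc.IH[OF True] unfolding split_last .
  next
    case False
    have "j \<in> {1..N} \<Longrightarrow> real j * h < x" for j
      using False assms(1) mult_right_mono[of "real j" "real N" h] by auto
    then have "(\<Sum>j\<in>{1..N}. h * indicator {real j * h<..} x) = real N * h"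
      by (simp add: indicator_def)
    then show ?thesis using False Suc.prems split_last by (simp add: algebra_simps)
  qed
qed

lemma integrable_staircase:
  fixes \<mu> :: "real measure" and h :: real
  assumes "finite_measure \<mu>" "sets \<mu> = sets borel"
  shows "integrable \<mu> (\<lambda>x. \<Sum>j\<in>J. h * indicator {a j<..} x)"
proof -
  interpret finite_measure \<mu> by fact
  show ?thesis
    using assms(2)
    by (intro Bochner_Integration.integrable_sum integrable_mult_right integrable_real_indicator)
      (auto simp: less_top[symmetric])
qed

lemma integral_staircase:
  fixes \<mu> :: "real measure" and h :: real
  assumes "finite_measure \<mu>" "sets \<mu> = sets borel" "finite J"
  shows "(\<integral>x. (\<Sum>j\<in>J. h * indicator {a j<..} x) \<partial>\<mu>) = (\<Sum>j\<in>J. h * measure \<mu> {a j<..})"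
proof -
  interpret finite_measure \<mu> by fact
  have sets: "{a j<..} \<in> sets \<mu>" for j
    using assms(2) by simp
  then have "integrable \<mu> (\<lambda>x. h * indicator {a j<..} x)" for j
    by (intro integrable_mult_right integrable_real_indicator) (auto simp: less_top[symmetric])
  with sets show ?thesis
    by (simp add: Bochner_Integration.integral_sum sets.Int_space_eq2)
qed

lemma integrable_id_of_AE_bounded:
  fixes \<mu> :: "real measure"
  assumes "finite_measure \<mu>" "sets \<mu> = sets borel" "AE x in \<mu>. 0 \<le> x \<and> x \<le> B"
  shows "integrable \<mu> (\<lambda>x. x)"
proof -
  interpret finite_measure \<mu> by fact
  have "(\<lambda>x. x) \<in> borel_measurable \<mu>"
    unfolding measurable_cong_sets[OF assms(2) refl] by simp
  then show ?thesis
    using assms(3) by (intro integrable_const_bound[where B=B]) auto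
qed

text \<open>The staircase below the identity has a mean that is a positive combination of measures of
  half-lines, to which the hypothesis applies term by term.\<close>

lemma integral_id_le_of_measure_le:
  fixes \<mu> \<nu> :: "real measure" and B c \<delta> :: real
  assumes "prob_space \<mu>" "prob_space \<nu>"
    and sets_\<mu>: "sets \<mu> = sets borel" and sets_\<nu>: "sets \<nu> = sets borel"
    and range_\<mu>: "AE x in \<mu>. 0 \<le> x \<and> x \<le> B" and range_\<nu>: "AE x in \<nu>. 0 \<le> x \<and> x \<le> B"
    and "0 \<le> c"
    and measure_le: "\<And>A. A \<in> sets borel \<Longrightarrow> measure \<mu> A \<le> c * measure \<nu> A + \<delta>"
  shows "(\<integral>x. x \<partial>\<mu>) \<le> c * (\<integral>x. x \<partial>\<nu>) + \<delta> * B"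
proof (rule field_le_epsilon)
  fix e :: real assume "0 < e"
  interpret \<mu>: prob_space \<mu> by fact
  have "AE x in \<mu>. 0 \<le> B"
    using range_\<mu> by eventually_elim auto
  then have "0 \<le> B" by simp
  obtain N :: nat where N: "B / e < real N"
    using reals_Archimedean2 by blast
  with \<open>0 \<le> B\<close> \<open>0 < e\<close> have "0 < N"
    by (metis divide_nonneg_pos not_gr_zero not_less of_nat_0)
  define h where "h = B / real N"
  have "0 \<le> h" "real N * h = B"
    using \<open>0 \<le> B\<close> \<open>0 < N\<close> by (simp_all add: h_def)
  have "h < e"
    using N \<open>0 < N\<close> \<open>0 < e\<close> by (simp add: h_def pos_divide_less_eq mult.commute)
  define \<phi> where "\<phi> x = (\<Sum>j\<in>{1..N}. h * indicator {real j * h<..} x)" for x :: real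
  have \<phi>_approx: "0 \<le> x \<and> x \<le> B \<Longrightarrow> \<phi> x \<le> x \<and> x \<le> \<phi> x + h" for x
    unfolding \<phi>_def by (rule staircase_approx[OF \<open>0 \<le> h\<close>]) (use \<open>real N * h = B\<close> in auto)
  have finite: "finite_measure \<mu>" "finite_measure \<nu>"
    using assms(1,2) by (auto intro: prob_space.axioms(1))
  have integrable_\<phi>: "integrable Q \<phi>" if "finite_measure Q" "sets Q = sets borel" for Q
    unfolding \<phi>_def using that by (rule integrable_staircase)
  have integral_\<phi>: "(\<integral>x. \<phi> x \<partial>Q) = (\<Sum>j\<in>{1..N}. h * measure Q {real j * h<..})"
    if "finite_measure Q" "sets Q = sets borel" for Q
    unfolding \<phi>_def using that by (intro integral_staircase) auto
  have "AE x in \<mu>. x \<le> \<phi> x + h"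
    using range_\<mu> by eventually_elim (use \<phi>_approx in blast)
  then have "(\<integral>x. x \<partial>\<mu>) \<le> (\<integral>x. \<phi> x + h \<partial>\<mu>)"
    using integrable_id_of_AE_bounded[OF finite(1) sets_\<mu> range_\<mu>] integrable_\<phi>[OF finite(1) sets_\<mu>]
    by (intro integral_mono_AE) auto
  also have "\<dots> = (\<Sum>j\<in>{1..N}. h * measure \<mu> {real j * h<..}) + h"
    using integrable_\<phi>[OF finite(1) sets_\<mu>] integral_\<phi>[OF finite(1) sets_\<mu>]
    by (simp add: \<mu>.prob_space)
  also have "\<dots> \<le> (\<Sum>j\<in>{1..N}. h * (c * measure \<nu> {real j * h<..} + \<delta>)) + h"
    using measure_le \<open>0 \<le> h\<close> by (intro add_right_mono sum_mono mult_left_mono) auto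
  also have "\<dots> = c * (\<integral>x. \<phi> x \<partial>\<nu>) + \<delta> * B + h"
    using integral_\<phi>[OF finite(2) sets_\<nu>] \<open>real N * h = B\<close>
    by (simp add: algebra_simps sum.distrib sum_distrib_left)
  also have "\<dots> \<le> c * (\<integral>x. x \<partial>\<nu>) + \<delta> * B + h"
  proof -
    have "AE x in \<nu>. \<phi> x \<le> x"
      using range_\<nu> by eventually_elim (use \<phi>_approx in blast)
    then have "(\<integral>x. \<phi> x \<partial>\<nu>) \<le> (\<integral>x. x \<partial>\<nu>)"
      using integrable_id_of_AE_bounded[OF finite(2) sets_\<nu> range_\<nu>] integrable_\<phi>[OF finite(2) sets_\<nu>]
      by (intro integral_mono_AE)
    then show ?thesis
      using \<open>0 \<le> c\<close> by (simp add: mult_left_mono)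
  qed
  finally show "(\<integral>x. x \<partial>\<mu>) \<le> c * (\<integral>x. x \<partial>\<nu>) + \<delta> * B + e"
    using \<open>h < e\<close> by simp
qed

lemma power_sum_PiE:
  fixes a :: "'i \<Rightarrow> 'a::comm_semiring_1"
  assumes "finite I"
  shows "(\<Sum>i\<in>I. a i) ^ k = (\<Sum>f\<in>PiE {..<k} (\<lambda>_. I). \<Prod>j<k. a (f j))"
  using prod_sum_PiE[of "{..<k}" "\<lambda>_. I" "\<lambda>_. a"] assms by simp

lemma measurable_merge_resample:
  assumes "J \<subseteq> K"
  shows "merge (K - J) J \<in> Pi\<^sub>M K M \<Otimes>\<^sub>M Pi\<^sub>M K M \<rightarrow>\<^sub>M Pi\<^sub>M K M"
proof (rule measurable_PiM_single')
  fix i assume "i \<in> K"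
  then show "(\<lambda>p. merge (K - J) J p i) \<in> Pi\<^sub>M K M \<Otimes>\<^sub>M Pi\<^sub>M K M \<rightarrow>\<^sub>M M i"
    unfolding merge_def split_beta' by (cases "i \<in> J") auto
qed (use assms in \<open>auto simp: merge_def space_pair_measure space_PiM PiE_iff extensional_def\<close>)

text \<open>Merging reads only K - J from the first sample and J from the second, so it factors through
  the two independent restrictions, whose joint law is the product of the marginals.\<close>

lemma (in product_prob_space) distr_merge_resample:
  assumes "finite K" "J \<subseteq> K"
  shows "distr (Pi\<^sub>M K M \<Otimes>\<^sub>M Pi\<^sub>M K M) (Pi\<^sub>M K M) (merge (K - J) J) = Pi\<^sub>M K M"
proof -
  let ?restrict = "\<lambda>(S, T). (restrict S (K - J), restrict T J)"
  have K: "(K - J) \<union> J = K"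
    using assms(2) by blast
  have restrict_meas: "?restrict \<in> Pi\<^sub>M K M \<Otimes>\<^sub>M Pi\<^sub>M K M \<rightarrow>\<^sub>M Pi\<^sub>M (K - J) M \<Otimes>\<^sub>M Pi\<^sub>M J M"
    unfolding split_beta' using assms
    by (intro measurable_Pair measurable_compose[OF measurable_fst measurable_restrict_subset]
        measurable_compose[OF measurable_snd measurable_restrict_subset]) auto
  have merge_meas: "merge (K - J) J \<in> Pi\<^sub>M (K - J) M \<Otimes>\<^sub>M Pi\<^sub>M J M \<rightarrow>\<^sub>M Pi\<^sub>M K M"
    using measurable_merge[of "K - J" J M] K by simp
  have "distr (Pi\<^sub>M K M \<Otimes>\<^sub>M Pi\<^sub>M K M) (Pi\<^sub>M (K - J) M \<Otimes>\<^sub>M Pi\<^sub>M J M) ?restrict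
      = distr (Pi\<^sub>M K M) (Pi\<^sub>M (K - J) M) (\<lambda>S. restrict S (K - J))
          \<Otimes>\<^sub>M distr (Pi\<^sub>M K M) (Pi\<^sub>M J M) (\<lambda>T. restrict T J)"
    using assms by (intro pair_measure_distr[symmetric] measurable_restrict_subset)
      (auto simp: distr_restrict[symmetric] intro!: prob_space_imp_sigma_finite prob_space_PiM prob_space)
  also have "\<dots> = Pi\<^sub>M (K - J) M \<Otimes>\<^sub>M Pi\<^sub>M J M"
    using assms by (simp add: distr_restrict[symmetric])
  finally have restrict_distr:
    "distr (Pi\<^sub>M K M \<Otimes>\<^sub>M Pi\<^sub>M K M) (Pi\<^sub>M (K - J) M \<Otimes>\<^sub>M Pi\<^sub>M J M) ?restrict
      = Pi\<^sub>M (K - J) M \<Otimes>\<^sub>M Pi\<^sub>M J M" .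
  have "merge (K - J) J = merge (K - J) J \<circ> ?restrict"
    by (auto simp: merge_def fun_eq_iff)
  then have "distr (Pi\<^sub>M K M \<Otimes>\<^sub>M Pi\<^sub>M K M) (Pi\<^sub>M K M) (merge (K - J) J)
      = distr (Pi\<^sub>M (K - J) M \<Otimes>\<^sub>M Pi\<^sub>M J M) (Pi\<^sub>M K M) (merge (K - J) J)"
    by (metis distr_distr[OF merge_meas restrict_meas] restrict_distr)
  also have "\<dots> = Pi\<^sub>M K M"
    using distr_merge[of "K - J" J] assms K finite_subset by auto
  finally show ?thesis .
qed

lemma (in product_prob_space) integral_merge_resample:
  fixes g :: "('i \<Rightarrow> 'a) \<Rightarrow> real"
  assumes "finite K" "J \<subseteq> K" "g \<in> borel_measurable (Pi\<^sub>M K M)"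
  shows "(\<integral>p. g (merge (K - J) J p) \<partial>(Pi\<^sub>M K M \<Otimes>\<^sub>M Pi\<^sub>M K M)) = (\<integral>S. g S \<partial>Pi\<^sub>M K M)"
  using integral_distr[OF measurable_merge_resample[OF assms(2)] assms(3)]
    distr_merge_resample[OF assms(1,2)] by simp

lemma merge_resample_in_space:
  assumes "J \<subseteq> K" "S \<in> space (Pi\<^sub>M K M)" "T \<in> space (Pi\<^sub>M K M)"
  shows "merge (K - J) J (S, T) \<in> space (Pi\<^sub>M K M)"
  using assms by (auto simp: space_PiM PiE_iff merge_def extensional_def)

lemma merge_resample_empty:
  assumes "S \<in> space (Pi\<^sub>M K M)"
  shows "merge K {} (S, T) = S"
  using assms by (auto simp: merge_def space_PiM PiE_def extensional_def fun_eq_iff)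

lemma neighbours_merge_resample_insert:
  assumes "a < n"
  shows "neighbours n (merge ({..<n} - J) J (S, T)) (merge ({..<n} - insert a J) (insert a J) (S, T))"
  using assms unfolding neighbours_def merge_def by auto

lemma group_privacy:
  fixes g :: "(nat \<Rightarrow> 'z) \<Rightarrow> real"
  assumes "0 \<le> \<epsilon>" "0 \<le> D"
    and dp: "\<And>S S'. S \<in> space (sample_space P n) \<Longrightarrow> S' \<in> space (sample_space P n) \<Longrightarrow>
               neighbours n S S' \<Longrightarrow> g S \<le> exp \<epsilon> * g S' + D"
    and "finite J" "J \<subseteq> {..<n}"
    and S: "S \<in> space (sample_space P n)" and T: "T \<in> space (sample_space P n)"
  shows "g S \<le> exp (real (card J) * \<epsilon>) * (g (merge ({..<n} - J) J (S, T)) + real (card J) * D)"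
  using \<open>finite J\<close> \<open>J \<subseteq> {..<n}\<close>
proof (induction J rule: finite_induct)
  case empty
  then show ?case
    using merge_resample_empty[of S "{..<n}" "\<lambda>_. P" T] S by (simp add: sample_space_def)
next
  case (insert a J)
  let ?U = "merge ({..<n} - J) J (S, T)"
  let ?U' = "merge ({..<n} - insert a J) (insert a J) (S, T)"
  define r where "r = real (card J)"
  have U: "?U \<in> space (sample_space P n)" and U': "?U' \<in> space (sample_space P n)"
    using insert.prems S T by (auto simp: sample_space_def intro!: merge_resample_in_space)
  have "g S \<le> exp (r * \<epsilon>) * (g ?U + r * D)"
    using insert by (simp add: r_def)
  also have "\<dots> \<le> exp (r * \<epsilon>) * (exp \<epsilon> * g ?U' + D + r * D)"
    using dp[OF U U' neighbours_merge_resample_insert] insert.prems by simp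
  also have "\<dots> = exp ((r + 1) * \<epsilon>) * g ?U' + exp (r * \<epsilon>) * ((r + 1) * D)"
    by (simp add: algebra_simps exp_add)
  also have "\<dots> \<le> exp ((r + 1) * \<epsilon>) * g ?U' + exp ((r + 1) * \<epsilon>) * ((r + 1) * D)"
    using \<open>0 \<le> \<epsilon>\<close> \<open>0 \<le> D\<close> by (intro add_left_mono mult_right_mono) (auto simp: r_def distrib_right)
  also have "\<dots> = exp ((r + 1) * \<epsilon>) * (g ?U' + (r + 1) * D)"
    by (simp add: distrib_left)
  finally show ?case
    using insert.hyps by (simp add: r_def add.commute)
qed

lemma power_emp_eval:
  "(emp_eval n M S T) ^ k
    = (1 / real n) ^ k * (\<Sum>f\<in>PiE {..<k} (\<lambda>_. {..<n}). \<Prod>j<k. eval_mean M S (T (f j)))"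
  unfolding emp_eval_def power_mult_distrib power_sum_PiE[OF finite_lessThan] ..

lemma power_emp_eval_shift:
  assumes "0 < n"
  shows "(emp_eval n M S S + c) ^ k
    = (1 / real n) ^ k * (\<Sum>f\<in>PiE {..<k} (\<lambda>_. {..<n}). \<Prod>j<k. eval_mean M S (S (f j)) + c)"
proof -
  have "emp_eval n M S S + c = 1 / real n * (\<Sum>i<n. eval_mean M S (S i) + c)"
    using assms by (simp add: emp_eval_def sum.distrib field_simps)
  then show ?thesis
    by (simp only: power_mult_distrib power_sum_PiE[OF finite_lessThan])
qed

locale dp_evaluation =
  fixes P :: "'z measure" and n :: nat
    and M :: "(nat \<Rightarrow> 'z) \<Rightarrow> 'z \<Rightarrow> real measure"
    and \<epsilon> \<delta> B :: real
  assumes P: "prob_space P"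
    and eps: "0 \<le> \<epsilon>" and delta: "0 \<le> \<delta>"
    and M_meas: "(\<lambda>p. M (fst p) (snd p)) \<in> measurable (sample_space P n \<Otimes>\<^sub>M P) (subprob_algebra borel)"
    and M_prob: "\<And>S z. S \<in> space (sample_space P n) \<Longrightarrow> z \<in> space P \<Longrightarrow>
                   prob_space (M S z) \<and> sets (M S z) = sets borel"
    and M_range: "\<And>S z. S \<in> space (sample_space P n) \<Longrightarrow> z \<in> space P \<Longrightarrow>
                   (AE x in M S z. 0 \<le> x \<and> x \<le> B)"
    and DP: "dp_eval P n M \<epsilon> \<delta>"
begin

abbreviation \<Omega> :: "(nat \<Rightarrow> 'z) measure" where
  "\<Omega> \<equiv> sample_space P n"

lemma prob_space_sample: "prob_space \<Omega>"
  unfolding sample_space_def by (rule prob_space_PiM) (simp add: P)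

lemma product_prob_space_P: "product_prob_space (\<lambda>_::nat. P)"
  by (simp add: product_prob_space_def product_prob_space_axioms_def product_sigma_finite_def
      P prob_space_imp_sigma_finite)

lemma sample_in_space_pair:
  "p \<in> space (\<Omega> \<Otimes>\<^sub>M \<Omega>) \<Longrightarrow> fst p \<in> space \<Omega> \<and> snd p \<in> space \<Omega>"
  by (auto simp: space_pair_measure)

lemma sample_coordinate_in_space: "S \<in> space \<Omega> \<Longrightarrow> i < n \<Longrightarrow> S i \<in> space P"
  by (auto simp: sample_space_def space_PiM PiE_iff)

lemma measurable_eval_mean: "(\<lambda>(S, z). eval_mean M S z) \<in> borel_measurable (\<Omega> \<Otimes>\<^sub>M P)"
proof -
  have "(\<lambda>(S, z). eval_mean M S z) = (\<lambda>\<mu>. \<integral>x. x \<partial>\<mu>) \<circ> (\<lambda>p. M (fst p) (snd p))"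
    by (auto simp: eval_mean_def fun_eq_iff)
  also have "\<dots> \<in> borel_measurable (\<Omega> \<Otimes>\<^sub>M P)"
    by (rule measurable_comp[OF M_meas integral_measurable_subprob_algebra]) simp
  finally show ?thesis .
qed

lemma measurable_eval_mean_coordinate:
  "i < n \<Longrightarrow> (\<lambda>U. eval_mean M U (U i)) \<in> borel_measurable \<Omega>"
  using measurable_Pair_compose_split[OF measurable_eval_mean, of "\<lambda>U. U" \<Omega> "\<lambda>U. U i"]
  by (simp add: sample_space_def measurable_component_singleton)

lemma measurable_eval_mean_held_out:
  "i < n \<Longrightarrow> (\<lambda>p. eval_mean M (fst p) (snd p i)) \<in> borel_measurable (\<Omega> \<Otimes>\<^sub>M \<Omega>)"
  using measurable_Pair_compose_split[OF measurable_eval_mean, of fst "\<Omega> \<Otimes>\<^sub>M \<Omega>" "\<lambda>p. snd p i"]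
  by (simp add: sample_space_def measurable_compose[OF measurable_snd measurable_component_singleton])

lemma eval_mean_bounds:
  assumes "S \<in> space \<Omega>" "z \<in> space P"
  shows "0 \<le> eval_mean M S z \<and> eval_mean M S z \<le> B"
proof -
  interpret prob_space "M S z"
    using M_prob[OF assms] by simp
  have range: "AE x in M S z. 0 \<le> x \<and> x \<le> B"
    using M_range[OF assms] .
  have "integrable (M S z) (\<lambda>x. x)"
    using M_prob[OF assms] range by (intro integrable_id_of_AE_bounded) (auto intro: prob_space.axioms(1))
  then show ?thesis
    using range unfolding eval_mean_def
    by (auto intro: integral_nonneg_AE integral_le_const)
qed

lemma bound_nonneg: "0 \<le> B"
proof -
  obtain z where "z \<in> space P"
    using prob_space.not_empty[OF P] by blast
  moreover obtain S where "S \<in> space \<Omega>"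
    using prob_space.not_empty[OF prob_space_sample] by blast
  ultimately show ?thesis
    using eval_mean_bounds by force
qed

lemma eval_mean_dp:
  assumes "S \<in> space \<Omega>" "S' \<in> space \<Omega>" "neighbours n S S'" "z \<in> space P"
  shows "eval_mean M S z \<le> exp \<epsilon> * eval_mean M S' z + \<delta> * B"
  unfolding eval_mean_def
  using M_prob M_range DP assms unfolding dp_eval_def
  by (intro integral_id_le_of_measure_le) auto

lemma emp_eval_bounds:
  assumes "S \<in> space \<Omega>" "T \<in> space \<Omega>"
  shows "0 \<le> emp_eval n M S T \<and> emp_eval n M S T \<le> B"
proof -
  have "i < n \<Longrightarrow> 0 \<le> eval_mean M S (T i) \<and> eval_mean M S (T i) \<le> B" for i
    using eval_mean_bounds[OF assms(1) sample_coordinate_in_space[OF assms(2)]] by blast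
  then have "0 \<le> (\<Sum>i<n. eval_mean M S (T i))" "(\<Sum>i<n. eval_mean M S (T i)) \<le> real n * B"
    using sum_bounded_above[of "{..<n}" "\<lambda>i. eval_mean M S (T i)" B] by (auto intro: sum_nonneg)
  then show ?thesis
    using bound_nonneg by (cases "n = 0") (auto simp: emp_eval_def field_simps)
qed

lemma eval_mean_resample:
  assumes "finite J" "J \<subseteq> {..<n}" "S \<in> space \<Omega>" "T \<in> space \<Omega>" "z \<in> space P"
  shows "eval_mean M S z
    \<le> exp (real (card J) * \<epsilon>) * (eval_mean M (merge ({..<n} - J) J (S, T)) z + real (card J) * (\<delta> * B))"
  using assms eps delta bound_nonneg eval_mean_dp
  by (intro group_privacy[where g="\<lambda>S. eval_mean M S z"]) auto

lemma prod_eval_mean_le_resampled: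
  assumes f: "f ` {..<k} \<subseteq> {..<n}" and S: "S \<in> space \<Omega>" and T: "T \<in> space \<Omega>"
  defines "U \<equiv> merge ({..<n} - f ` {..<k}) (f ` {..<k}) (S, T)"
  shows "(\<Prod>j<k. eval_mean M S (T (f j)))
    \<le> exp (real k ^ 2 * \<epsilon>) * (\<Prod>j<k. eval_mean M U (U (f j)) + real k * \<delta> * B)"
proof -
  have U: "U \<in> space \<Omega>"
    unfolding U_def using f S T by (auto simp: sample_space_def intro!: merge_resample_in_space)
  have card: "card (f ` {..<k}) \<le> k"
    using card_image_le[of "{..<k}" f] by simp
  have factor: "0 \<le> eval_mean M S (T (f j))
      \<and> eval_mean M S (T (f j)) \<le> exp (real k * \<epsilon>) * (eval_mean M U (U (f j)) + real k * \<delta> * B)"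
    if "j < k" for j
  proof -
    have z: "T (f j) \<in> space P" and "U (f j) = T (f j)"
      using that f sample_coordinate_in_space[OF T] by (auto simp: U_def)
    moreover have "eval_mean M S (T (f j)) \<le> exp (real (card (f ` {..<k})) * \<epsilon>)
        * (eval_mean M U (T (f j)) + real (card (f ` {..<k})) * (\<delta> * B))"
      unfolding U_def using f S T z by (intro eval_mean_resample) auto
    moreover have "\<dots> \<le> exp (real k * \<epsilon>) * (eval_mean M U (T (f j)) + real k * (\<delta> * B))"
      using card eps delta bound_nonneg eval_mean_bounds[OF U z]
      by (intro mult_mono add_left_mono mult_right_mono) (auto intro: mult_right_mono)
    ultimately show ?thesis
      using eval_mean_bounds[OF S z] by (simp add: mult.assoc)
  qed
  have "(\<Prod>j<k. eval_mean M S (T (f j)))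
      \<le> (\<Prod>j<k. exp (real k * \<epsilon>) * (eval_mean M U (U (f j)) + real k * \<delta> * B))"
    using factor by (intro prod_mono) auto
  also have "\<dots> = exp (real k * \<epsilon>) ^ k * (\<Prod>j<k. eval_mean M U (U (f j)) + real k * \<delta> * B)"
    by (simp add: prod.distrib)
  also have "exp (real k * \<epsilon>) ^ k = exp (real k ^ 2 * \<epsilon>)"
    by (simp add: exp_of_nat_mult[symmetric] power2_eq_square mult.assoc)
  finally show ?thesis .
qed

lemma measurable_prod_eval_mean:
  "f ` {..<k} \<subseteq> {..<n} \<Longrightarrow> (\<lambda>U. \<Prod>j<k. eval_mean M U (U (f j)) + c) \<in> borel_measurable \<Omega>"
  by (intro borel_measurable_prod borel_measurable_add borel_measurable_const
      measurable_eval_mean_coordinate) auto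

lemma prod_eval_mean_bounds:
  assumes "f ` {..<k} \<subseteq> {..<n}" "0 \<le> c" "U \<in> space \<Omega>"
  shows "0 \<le> (\<Prod>j<k. eval_mean M U (U (f j)) + c) \<and> (\<Prod>j<k. eval_mean M U (U (f j)) + c) \<le> (B + c) ^ k"
proof -
  have "j < k \<Longrightarrow> 0 \<le> eval_mean M U (U (f j)) \<and> eval_mean M U (U (f j)) \<le> B" for j
    using assms(1) by (intro eval_mean_bounds[OF assms(3)] sample_coordinate_in_space[OF assms(3)]) auto
  then show ?thesis
    using assms(2) prod_mono[of "{..<k}" "\<lambda>j. eval_mean M U (U (f j)) + c" "\<lambda>_. B + c"]
    by (auto intro: prod_nonneg)
qed

lemma integrable_prod_eval_mean:
  fixes k :: nat
  assumes f: "f ` {..<k} \<subseteq> {..<n}" and "0 \<le> c"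
  defines "G \<equiv> \<lambda>U. \<Prod>j<k. eval_mean M U (U (f j)) + c"
    and "R \<equiv> merge ({..<n} - f ` {..<k}) (f ` {..<k})"
  shows "integrable \<Omega> G" "integrable (\<Omega> \<Otimes>\<^sub>M \<Omega>) (\<lambda>p. G (R p))"
proof -
  interpret \<Omega>: prob_space \<Omega> by (rule prob_space_sample)
  interpret \<Omega>\<Omega>: prob_space "\<Omega> \<Otimes>\<^sub>M \<Omega>" by (rule prob_space_pair[OF prob_space_sample prob_space_sample])
  have R: "R \<in> \<Omega> \<Otimes>\<^sub>M \<Omega> \<rightarrow>\<^sub>M \<Omega>"
    unfolding R_def sample_space_def using f by (rule measurable_merge_resample)
  have G: "G \<in> borel_measurable \<Omega>"
    unfolding G_def using f by (rule measurable_prod_eval_mean)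
  have "U \<in> space \<Omega> \<Longrightarrow> \<bar>G U\<bar> \<le> (B + c) ^ k" for U
    using prod_eval_mean_bounds[OF f \<open>0 \<le> c\<close>] by (force simp: G_def)
  then show "integrable \<Omega> G" "integrable (\<Omega> \<Otimes>\<^sub>M \<Omega>) (\<lambda>p. G (R p))"
    using G measurable_space[OF R] measurable_comp[OF R G]
    by (auto simp: comp_def intro!: \<Omega>.integrable_const_bound[where B="(B + c) ^ k"]
        \<Omega>\<Omega>.integrable_const_bound[where B="(B + c) ^ k"])
qed

lemma power_emp_eval_le_resampled:
  assumes "S \<in> space \<Omega>" "T \<in> space \<Omega>"
  shows "(emp_eval n M S T) ^ k \<le> (1 / real n) ^ k * (\<Sum>f\<in>PiE {..<k} (\<lambda>_. {..<n}).
      exp (real k ^ 2 * \<epsilon>) * (\<Prod>j<k. eval_mean M (merge ({..<n} - f ` {..<k}) (f ` {..<k}) (S, T))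
        (merge ({..<n} - f ` {..<k}) (f ` {..<k}) (S, T) (f j)) + real k * \<delta> * B))"
  unfolding power_emp_eval using assms
  by (intro mult_left_mono sum_mono prod_eval_mean_le_resampled) (auto simp: PiE_iff)

lemma integrable_power_emp_eval:
  "integrable (\<Omega> \<Otimes>\<^sub>M \<Omega>) (\<lambda>p. (emp_eval n M (fst p) (snd p)) ^ k)"
proof -
  interpret prob_space "\<Omega> \<Otimes>\<^sub>M \<Omega>"
    by (rule prob_space_pair[OF prob_space_sample prob_space_sample])
  have "(\<lambda>p. (emp_eval n M (fst p) (snd p)) ^ k) \<in> borel_measurable (\<Omega> \<Otimes>\<^sub>M \<Omega>)"
    unfolding emp_eval_def
    by (intro borel_measurable_power borel_measurable_times borel_measurable_const
        borel_measurable_sum measurable_eval_mean_held_out) auto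
  then show ?thesis
    using emp_eval_bounds sample_in_space_pair
    by (intro integrable_const_bound[where B="B ^ k"]) (auto intro!: power_mono)
qed

theorem moment_bound:
  assumes "1 \<le> k"
  shows "(\<integral>p. (emp_eval n M (fst p) (snd p)) ^ k \<partial>(\<Omega> \<Otimes>\<^sub>M \<Omega>))
    \<le> exp (real k ^ 2 * \<epsilon>) * (\<integral>S. (emp_eval n M S S + real k * \<delta> * B) ^ k \<partial>\<Omega>)"
proof (cases "n = 0")
  case True
  \<comment> \<open>then 1 / real n = 0, so both empirical evaluations vanish\<close>
  then have "(\<integral>p. (emp_eval n M (fst p) (snd p)) ^ k \<partial>(\<Omega> \<Otimes>\<^sub>M \<Omega>)) = 0"
    using assms by (simp add: emp_eval_def)
  moreover have "0 \<le> (\<integral>S. (emp_eval n M S S + real k * \<delta> * B) ^ k \<partial>\<Omega>)"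
    using True delta bound_nonneg by (intro Bochner_Integration.integral_nonneg) (simp add: emp_eval_def)
  ultimately show ?thesis by simp
next
  case False
  define F where "F = PiE {..<k} (\<lambda>_. {..<n})"
  define c where "c = real k * \<delta> * B"
  define E where "E = exp (real k ^ 2 * \<epsilon>)"
  define resample :: "(nat \<Rightarrow> nat) \<Rightarrow> (nat \<Rightarrow> 'z) \<times> (nat \<Rightarrow> 'z) \<Rightarrow> nat \<Rightarrow> 'z"
    where "resample f = merge ({..<n} - f ` {..<k}) (f ` {..<k})" for f
  define g where "g f = (\<lambda>U. \<Prod>j<k. eval_mean M U (U (f j)) + c)" for f :: "nat \<Rightarrow> nat"
  have F: "f ` {..<k} \<subseteq> {..<n}" if "f \<in> F" for f
    using that by (auto simp: F_def PiE_iff)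
  have "0 \<le> c"
    using delta bound_nonneg by (simp add: c_def)
  have integrable_g: "integrable \<Omega> (g f)" "integrable (\<Omega> \<Otimes>\<^sub>M \<Omega>) (\<lambda>p. g f (resample f p))"
    if "f \<in> F" for f
    using integrable_prod_eval_mean[OF F[OF that] \<open>0 \<le> c\<close>] by (simp_all add: g_def resample_def)
  have integral_resample: "(\<integral>p. g f (resample f p) \<partial>(\<Omega> \<Otimes>\<^sub>M \<Omega>)) = (\<integral>U. g f U \<partial>\<Omega>)"
    if "f \<in> F" for f
    using product_prob_space.integral_merge_resample[OF product_prob_space_P finite_lessThan F[OF that]
        measurable_prod_eval_mean[OF F[OF that], unfolded sample_space_def]]
    by (simp add: resample_def g_def sample_space_def)
  have pointwise: "(emp_eval n M (fst p) (snd p)) ^ k \<le> (1 / real n) ^ k * (\<Sum>f\<in>F. E * g f (resample f p))"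
    if "p \<in> space (\<Omega> \<Otimes>\<^sub>M \<Omega>)" for p
    using power_emp_eval_le_resampled[of "fst p" "snd p"] sample_in_space_pair[OF that]
    by (simp add: F_def E_def g_def c_def resample_def)
  have "(\<integral>p. (emp_eval n M (fst p) (snd p)) ^ k \<partial>(\<Omega> \<Otimes>\<^sub>M \<Omega>))
      \<le> (\<integral>p. (1 / real n) ^ k * (\<Sum>f\<in>F. E * g f (resample f p)) \<partial>(\<Omega> \<Otimes>\<^sub>M \<Omega>))"
    using integrable_power_emp_eval integrable_g pointwise by (intro integral_mono) auto
  also have "\<dots> = (1 / real n) ^ k * (\<Sum>f\<in>F. E * (\<integral>p. g f (resample f p) \<partial>(\<Omega> \<Otimes>\<^sub>M \<Omega>)))"
    using integrable_g by simp
  also have "\<dots> = (1 / real n) ^ k * (\<Sum>f\<in>F. E * (\<integral>U. g f U \<partial>\<Omega>))"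
    using integral_resample by simp
  also have "\<dots> = E * (\<integral>U. (1 / real n) ^ k * (\<Sum>f\<in>F. g f U) \<partial>\<Omega>)"
    using integrable_g by (simp add: sum_distrib_left mult.left_commute)
  also have "\<dots> = E * (\<integral>S. (emp_eval n M S S + real k * \<delta> * B) ^ k \<partial>\<Omega>)"
    using False by (simp add: power_emp_eval_shift F_def g_def c_def)
  finally show ?thesis
    by (simp add: E_def)
qed

end

theorem lemma29:
  fixes P :: "'z measure" and n :: nat
    and M :: "(nat \<Rightarrow> 'z) \<Rightarrow> 'z \<Rightarrow> real measure"
    and \<epsilon> \<delta> B :: real and k :: nat
  assumes P: "prob_space P"
    and eps: "0 \<le> \<epsilon>" and delta: "0 \<le> \<delta>"
    and M_meas: "(\<lambda>p. M (fst p) (snd p)) \<in> measurable (sample_space P n \<Otimes>\<^sub>M P) (subprob_algebra borel)"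
    and M_prob: "\<And>S z. S \<in> space (sample_space P n) \<Longrightarrow> z \<in> space P \<Longrightarrow>
                   prob_space (M S z) \<and> sets (M S z) = sets borel"
    and M_range: "\<And>S z. S \<in> space (sample_space P n) \<Longrightarrow> z \<in> space P \<Longrightarrow>
                   (AE x in M S z. 0 \<le> x \<and> x \<le> B)"
    and DP: "dp_eval P n M \<epsilon> \<delta>"
    and k: "1 \<le> k"
  shows "(\<integral>p. (emp_eval n M (fst p) (snd p)) ^ k \<partial>(sample_space P n \<Otimes>\<^sub>M sample_space P n))
         \<le> exp (real k ^ 2 * \<epsilon>) *
           (\<integral>S. (emp_eval n M S S + real k * \<delta> * B) ^ k \<partial>(sample_space P n))"
  using dp_evaluation.moment_bound[OF dp_evaluation.intro[OF P eps delta M_meas M_prob M_range DP] k] .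

end
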